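(* Let $\mathbb{K}$ be a field, $n\ge3$ (so that $\mathbb{D}_n$ is defined), and $\alpha_1,\dots,\alpha_n\in\mathbb{K}^*$. If $n$ is even, then $X_{\mathbb{D}_n}(\alpha_1,\dots,\alpha_n)\simeq X_{\mathbb{D}_n}(\alpha,\beta,1,\dots,1)$ for some $\alpha,\beta\in\mathbb{K}^*$ depending on the $\alpha_i$. If $n$ is odd, then $X_{\mathbb{D}_n}(\alpha_1,\dots,\alpha_n)\simeq X_{\mathbb{D}_n}(\alpha,1,\dots,1)$ for some $\alpha\in\mathbb{K}^*$ depending on the $\alpha_i$.
   Context: $X_{\mathbb{D}_n}(\alpha_1,\dots,\alpha_n)$ is the affine variety over $\mathbb{K}$ in variables $x_1,\dots,x_n,x'_1,\dots,x'_n$ defined by $x_1x'_1=1+\alpha_1x_3$, $x_2x'_2=1+\alpha_2x_3$, $x_3x'_3=1+\alpha_3x_1x_2x_4$, $x_ix'_i=1+\alpha_ix_{i-1}x_{i+1}$ for $4\le i\le n-1$, $x_nx'_n=1+\alpha_nx_{n-1}$ (with the obvious modifications for $n=3$, where $x_3x'_3=1+\alpha_3x_1x_2$). It corresponds to the tree $\mathbb{D}_n$: vertices $1,2$ are leaves attached to vertex $3$, and $3,4,\dots,n$ form a path. *)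

theory Defs
  imports "HOL-Library.Poly_Mapping"
begin

type_synonym 'a mpoly = "(nat \<Rightarrow>\<^sub>0 nat) \<Rightarrow>\<^sub>0 'a"

definition mVar :: "nat \<Rightarrow> 'a::comm_ring_1 mpoly" where
  "mVar i = Poly_Mapping.single (Poly_Mapping.single i 1) 1"

definition mConst :: "'a::comm_ring_1 \<Rightarrow> 'a mpoly" where
  "mConst c = Poly_Mapping.single 0 c"

definition mvars :: "'a::comm_ring_1 mpoly \<Rightarrow> nat set" where
  "mvars p = \<Union> (Poly_Mapping.keys ` Poly_Mapping.keys p)"

definition msubst :: "(nat \<Rightarrow> 'a::comm_ring_1 mpoly) \<Rightarrow> 'a mpoly \<Rightarrow> 'a mpoly" where
  "msubst g p = (\<Sum>m\<in>Poly_Mapping.keys p.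
      mConst (Poly_Mapping.lookup p m) *
      (\<Prod>i\<in>Poly_Mapping.keys m. g i ^ Poly_Mapping.lookup m i))"

definition mideal :: "nat set \<Rightarrow> 'a::comm_ring_1 mpoly set \<Rightarrow> 'a mpoly set" where
  "mideal V S = {p. \<exists>A f. finite A \<and> A \<subseteq> S \<and> (\<forall>q\<in>A. mvars (f q) \<subseteq> V) \<and>
                        p = (\<Sum>q\<in>A. f q * q)}"

(* K-algebra isomorphism K[x_V]/(S) \<cong> K[x_V]/(T), i.e. isomorphism of the affine
  varieties (schemes) Spec K[x_V]/(S) and Spec K[x_V]/(T): mutually inverse
  polynomial maps given by images of the variables. *)
definition coord_ring_iso :: "nat set \<Rightarrow> 'a::comm_ring_1 mpoly set \<Rightarrow> 'a mpoly set \<Rightarrow> bool" where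
  "coord_ring_iso V S T \<longleftrightarrow>
     (\<exists>F G. (\<forall>i\<in>V. mvars (F i) \<subseteq> V \<and> mvars (G i) \<subseteq> V) \<and>
       (\<forall>q\<in>T. msubst F q \<in> mideal V S) \<and>
       (\<forall>q\<in>S. msubst G q \<in> mideal V T) \<and>
       (\<forall>i\<in>V. msubst G (F i) - mVar i \<in> mideal V T) \<and>
       (\<forall>i\<in>V. msubst F (G i) - mVar i \<in> mideal V S))"

(* The tree D_n on vertices 1..n: 1 and 2 attached to 3, and 3 - 4 - ... - n a path. *)
definition Dn_edge :: "nat \<Rightarrow> nat \<Rightarrow> bool" where
  "Dn_edge i j \<longleftrightarrow> {i, j} = {1, 3} \<or> {i, j} = {2, 3} \<or>
     (3 \<le> i \<and> j = i + 1) \<or> (3 \<le> j \<and> i = j + 1)"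

definition Dn_nbrs :: "nat \<Rightarrow> nat \<Rightarrow> nat set" where
  "Dn_nbrs n i = {j \<in> {1..n}. Dn_edge i j}"

(* Variables: x_i is mVar i and x'_i is mVar (n + i), for 1 \<le> i \<le> n. *)
definition XD_vars :: "nat \<Rightarrow> nat set" where
  "XD_vars n = {1..2*n}"

definition XD_eqs :: "nat \<Rightarrow> (nat \<Rightarrow> 'a::field) \<Rightarrow> 'a mpoly set" where
  "XD_eqs n \<alpha> = (\<lambda>i. mVar i * mVar (n + i) - 1 -
        mConst (\<alpha> i) * (\<Prod>j\<in>Dn_nbrs n i. mVar j)) ` {1..n}"

definition XD_iso :: "nat \<Rightarrow> (nat \<Rightarrow> 'a::field) \<Rightarrow> (nat \<Rightarrow> 'a) \<Rightarrow> bool" where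
  "XD_iso n \<alpha> \<beta> \<longleftrightarrow> coord_ring_iso (XD_vars n) (XD_eqs n \<alpha>) (XD_eqs n \<beta>)"

end

theory Submission
  imports Defs
begin

text \<open>Rescaling x_i \<mapsto> c_i x_i, x'_i \<mapsto> x'_i / c_i with all c_i \<noteq> 0 is an automorphism
  of the polynomial ring which turns the equation of X(\<beta>) at vertex i into that of X(\<alpha>) as soon as
  \<beta>_i \<Prod>_{j ~ i} c_j = \<alpha>_i. Asking \<beta>_i = 1 for i \<ge> 3 amounts to c_{i-1} c_{i+1} = \<alpha>_i
  along the path (with c_{n+1} = 1), which is solved from the end n downwards with c_n = t free.
  The leaves 1 and 2 absorb what is left at vertex 3, forcing \<beta>_1 = \<alpha>_1 / c_3 and
  \<beta>_2 = \<alpha>_2 / c_3. For odd n, c_3 is a nonzero constant times t or 1/t, so t can be chosen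
  with c_3 = \<alpha>_2, i.e. \<beta>_2 = 1.\<close>

definition msubst_mon :: "(nat \<Rightarrow> 'a::comm_ring_1 mpoly) \<Rightarrow> (nat \<Rightarrow>\<^sub>0 nat) \<Rightarrow> 'a mpoly" where
  "msubst_mon g m = (\<Prod>i\<in>Poly_Mapping.keys m. g i ^ Poly_Mapping.lookup m i)"

lemma msubst_mon_superset:
  "finite S \<Longrightarrow> Poly_Mapping.keys m \<subseteq> S \<Longrightarrow>
   msubst_mon g m = (\<Prod>i\<in>S. g i ^ Poly_Mapping.lookup m i)"
  unfolding msubst_mon_def by (rule prod.mono_neutral_left) (auto simp: in_keys_iff)

lemma msubst_mon_add: "msubst_mon g (m1 + m2) = msubst_mon g m1 * msubst_mon g m2"
proof -
  let ?S = "Poly_Mapping.keys m1 \<union> Poly_Mapping.keys m2"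
  have "msubst_mon g (m1 + m2) = (\<Prod>i\<in>?S. g i ^ Poly_Mapping.lookup (m1 + m2) i)"
    by (rule msubst_mon_superset) (auto dest: set_mp[OF keys_add])
  also have "\<dots> = (\<Prod>i\<in>?S. g i ^ Poly_Mapping.lookup m1 i) * (\<Prod>i\<in>?S. g i ^ Poly_Mapping.lookup m2 i)"
    by (simp add: lookup_add power_add prod.distrib)
  also have "\<dots> = msubst_mon g m1 * msubst_mon g m2"
    using msubst_mon_superset[of ?S m1 g] msubst_mon_superset[of ?S m2 g] by simp
  finally show ?thesis .
qed

lemma mConst_0 [simp]: "mConst 0 = 0"
  by (simp add: mConst_def)

lemma mConst_1 [simp]: "mConst 1 = 1"
  by (simp add: mConst_def)

lemma mConst_add: "mConst (a + b) = mConst a + mConst b"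
  by (simp add: mConst_def single_add)

lemma mConst_uminus: "mConst (- a) = - mConst a"
  by (simp add: mConst_def single_uminus)

lemma mConst_mult: "mConst (a * b) = mConst a * mConst b"
  by (simp add: mConst_def mult_single)

lemma mConst_prod: "mConst (\<Prod>j\<in>A. f j) = (\<Prod>j\<in>A. mConst (f j))"
  by (induction A rule: infinite_finite_induct) (auto simp: mConst_mult)

lemma msubst_superset:
  "finite S \<Longrightarrow> Poly_Mapping.keys p \<subseteq> S \<Longrightarrow>
   msubst g p = (\<Sum>m\<in>S. mConst (Poly_Mapping.lookup p m) * msubst_mon g m)"
  unfolding msubst_def msubst_mon_def[symmetric]
  by (rule sum.mono_neutral_left) (auto simp: in_keys_iff)

lemma msubst_add: "msubst g (p + q) = msubst g p + msubst g q"
proof -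
  let ?S = "Poly_Mapping.keys p \<union> Poly_Mapping.keys q"
  have "msubst g (p + q) = (\<Sum>m\<in>?S. mConst (Poly_Mapping.lookup (p + q) m) * msubst_mon g m)"
    by (rule msubst_superset) (auto dest: set_mp[OF keys_add])
  also have "\<dots> = (\<Sum>m\<in>?S. mConst (Poly_Mapping.lookup p m) * msubst_mon g m)
                + (\<Sum>m\<in>?S. mConst (Poly_Mapping.lookup q m) * msubst_mon g m)"
    by (simp add: lookup_add mConst_add distrib_right sum.distrib)
  also have "\<dots> = msubst g p + msubst g q"
    using msubst_superset[of ?S p g] msubst_superset[of ?S q g] by simp
  finally show ?thesis .
qed

lemma msubst_uminus: "msubst g (- p) = - msubst g p"
proof -
  have "msubst g (- p) = (\<Sum>m\<in>Poly_Mapping.keys p. mConst (Poly_Mapping.lookup (- p) m) * msubst_mon g m)"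
    by (rule msubst_superset) (auto simp: in_keys_iff)
  also have "\<dots> = - msubst g p"
    by (simp add: msubst_def msubst_mon_def mConst_uminus sum_negf)
  finally show ?thesis .
qed

lemma msubst_diff: "msubst g (p - q) = msubst g p - msubst g q"
  using msubst_add[of g p "- q"] msubst_uminus[of g q] by simp

lemma msubst_zero [simp]: "msubst g 0 = 0"
  by (simp add: msubst_def)

lemma msubst_sum: "msubst g (\<Sum>x\<in>A. f x) = (\<Sum>x\<in>A. msubst g (f x))"
  by (induction A rule: infinite_finite_induct) (auto simp: msubst_add)

lemma msubst_single: "msubst g (Poly_Mapping.single m c) = mConst c * msubst_mon g m"
  by (subst msubst_superset[of "{m}"]) auto

lemma poly_mapping_sum_singles:
  "p = (\<Sum>m\<in>Poly_Mapping.keys p. Poly_Mapping.single m (Poly_Mapping.lookup p m))"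
  by (rule poly_mapping_eqI)
    (auto simp: lookup_sum lookup_single when_def in_keys_iff
      intro: sum.neutral[symmetric] simp del: lookup_not_eq_zero_eq_in_keys)

lemma msubst_mult: "msubst g (p * q) = msubst g p * msubst g q"
proof -
  let ?P = "Poly_Mapping.keys p" and ?Q = "Poly_Mapping.keys q"
  have "p * q = (\<Sum>a\<in>?P. Poly_Mapping.single a (Poly_Mapping.lookup p a)) *
                (\<Sum>b\<in>?Q. Poly_Mapping.single b (Poly_Mapping.lookup q b))"
    using poly_mapping_sum_singles[of p] poly_mapping_sum_singles[of q] by simp
  also have "\<dots> = (\<Sum>a\<in>?P. \<Sum>b\<in>?Q.
      Poly_Mapping.single (a + b) (Poly_Mapping.lookup p a * Poly_Mapping.lookup q b))"
    by (simp add: sum_distrib_left sum_distrib_right mult_single sum.swap[of _ ?Q])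
  finally have "msubst g (p * q) = (\<Sum>a\<in>?P. \<Sum>b\<in>?Q.
      mConst (Poly_Mapping.lookup p a) * msubst_mon g a * (mConst (Poly_Mapping.lookup q b) * msubst_mon g b))"
    by (simp add: msubst_sum msubst_single msubst_mon_add mConst_mult mult_ac)
  also have "\<dots> = msubst g p * msubst g q"
    by (simp add: msubst_def msubst_mon_def sum_distrib_left sum_distrib_right sum.swap[of _ ?Q])
  finally show ?thesis .
qed

lemma msubst_one [simp]: "msubst g 1 = 1"
  using msubst_single[of g 0 1] by (simp add: msubst_mon_def)

lemma msubst_prod: "msubst g (\<Prod>x\<in>A. f x) = (\<Prod>x\<in>A. msubst g (f x))"
  by (induction A rule: infinite_finite_induct) (auto simp: msubst_mult)

lemma msubst_mConst [simp]: "msubst g (mConst c) = mConst c"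
  using msubst_single[of g 0 c] by (simp add: mConst_def msubst_mon_def)

lemma msubst_mVar [simp]: "msubst g (mVar i) = g i"
  unfolding mVar_def by (simp add: msubst_single msubst_mon_def)

lemma mvars_mConst_mult_mVar: "mvars (mConst c * mVar i :: 'a::comm_ring_1 mpoly) \<subseteq> {i}"
  by (simp add: mvars_def mConst_def mVar_def mult_single)

lemma mvars_one [simp]: "mvars (1 :: 'a::comm_ring_1 mpoly) = {}"
  by (simp add: mvars_def)

lemma mem_mideal: "p \<in> S \<Longrightarrow> p \<in> mideal V S"
  unfolding mideal_def by (rule CollectI, rule exI[of _ "{p}"], rule exI[of _ "\<lambda>_. 1"]) auto

lemma zero_mem_mideal: "0 \<in> mideal V S"
  unfolding mideal_def by (rule CollectI, rule exI[of _ "{}"]) auto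

definition rescale :: "(nat \<Rightarrow> 'a::comm_ring_1) \<Rightarrow> nat \<Rightarrow> 'a mpoly" where
  "rescale s k = mConst (s k) * mVar k"

lemma msubst_rescale_rescale: "msubst (rescale s) (rescale s' k) = rescale (\<lambda>k. s' k * s k) k"
  by (simp add: rescale_def msubst_mult mConst_mult mult_ac)

definition dual_scale :: "nat \<Rightarrow> (nat \<Rightarrow> 'a::field) \<Rightarrow> nat \<Rightarrow> 'a" where
  "dual_scale n c k = (if k \<le> n then c k else inverse (c (k - n)))"

lemma dual_scale_inverse:
  assumes "\<forall>j\<in>{1..n}. c j \<noteq> 0" and "k \<in> XD_vars n"
  shows "dual_scale n (\<lambda>j. inverse (c j)) k * dual_scale n c k = 1"
proof (cases "k \<le> n")
  case False
  then have "k - n \<in> {1..n}"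
    using assms(2) by (auto simp: XD_vars_def)
  then have "c (k - n) \<noteq> 0"
    using assms(1) by blast
  then show ?thesis
    using False by (simp add: dual_scale_def)
qed (use assms in \<open>auto simp: dual_scale_def XD_vars_def\<close>)

definition XD_eq :: "nat \<Rightarrow> (nat \<Rightarrow> 'a::field) \<Rightarrow> nat \<Rightarrow> 'a mpoly" where
  "XD_eq n \<gamma> i = mVar i * mVar (n + i) - 1 - mConst (\<gamma> i) * (\<Prod>j\<in>Dn_nbrs n i. mVar j)"

lemma XD_eqs_eq_image: "XD_eqs n \<gamma> = XD_eq n \<gamma> ` {1..n}"
  by (simp add: XD_eqs_def XD_eq_def)

lemma Dn_nbrs_subset: "Dn_nbrs n i \<subseteq> {1..n}"
  by (auto simp: Dn_nbrs_def)

lemma msubst_rescale_XD_eq: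
  assumes i: "i \<in> {1..n}" and "c i \<noteq> 0"
  shows "msubst (rescale (dual_scale n c)) (XD_eq n \<gamma> i)
       = XD_eq n (\<lambda>i. \<gamma> i * (\<Prod>j\<in>Dn_nbrs n i. c j)) i"
proof -
  let ?F = "rescale (dual_scale n c)"
  have "(\<Prod>j\<in>Dn_nbrs n i. ?F j) = (\<Prod>j\<in>Dn_nbrs n i. mConst (c j) * mVar j)"
    using Dn_nbrs_subset[of n i] by (intro prod.cong) (auto simp: rescale_def dual_scale_def)
  then have nbrs: "(\<Prod>j\<in>Dn_nbrs n i. ?F j)
      = mConst (\<Prod>j\<in>Dn_nbrs n i. c j) * (\<Prod>j\<in>Dn_nbrs n i. mVar j)"
    by (simp add: prod.distrib mConst_prod)
  have "?F i * ?F (n + i) = mConst (c i * inverse (c i)) * (mVar i * mVar (n + i))"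
    using i by (simp add: rescale_def dual_scale_def mConst_mult mult_ac)
  then have pair: "?F i * ?F (n + i) = mVar i * mVar (n + i)"
    using \<open>c i \<noteq> 0\<close> by simp
  show ?thesis
    by (simp add: XD_eq_def msubst_diff msubst_mult msubst_prod nbrs pair mConst_mult mult_ac)
qed

lemma msubst_rescale_XD_eqs:
  assumes nz: "\<forall>j\<in>{1..n}. c j \<noteq> 0"
    and eq: "\<forall>i\<in>{1..n}. \<beta> i * (\<Prod>j\<in>Dn_nbrs n i. c j) = \<alpha> i"
    and q: "q \<in> XD_eqs n \<beta>"
  shows "msubst (rescale (dual_scale n c)) q \<in> mideal (XD_vars n) (XD_eqs n \<alpha>)"
proof -
  obtain i where i: "i \<in> {1..n}" and "q = XD_eq n \<beta> i"
    using q by (auto simp: XD_eqs_eq_image)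
  moreover have "(\<lambda>i. \<beta> i * (\<Prod>j\<in>Dn_nbrs n i. c j)) i = \<alpha> i"
    using eq i by simp
  ultimately have "msubst (rescale (dual_scale n c)) q = XD_eq n \<alpha> i"
    using msubst_rescale_XD_eq[OF i, of c \<beta>] nz i by (simp add: XD_eq_def)
  then show ?thesis
    using i by (auto intro: mem_mideal simp: XD_eqs_eq_image)
qed

lemma XD_iso_rescale:
  fixes c :: "nat \<Rightarrow> 'a::field"
  assumes nz: "\<forall>j\<in>{1..n}. c j \<noteq> 0"
    and eq: "\<forall>i\<in>{1..n}. \<beta> i * (\<Prod>j\<in>Dn_nbrs n i. c j) = \<alpha> i"
  shows "XD_iso n \<alpha> \<beta>"
proof -
  define c' where "c' = (\<lambda>j. inverse (c j))"
  define F where "F = rescale (dual_scale n c)"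
  define G where "G = rescale (dual_scale n c')"
  have nz': "\<forall>j\<in>{1..n}. c' j \<noteq> 0"
    using nz by (simp add: c'_def)
  have eq': "\<forall>i\<in>{1..n}. \<alpha> i * (\<Prod>j\<in>Dn_nbrs n i. c' j) = \<beta> i"
  proof
    fix i assume "i \<in> {1..n}"
    have "(\<Prod>j\<in>Dn_nbrs n i. c j) \<noteq> 0"
      using nz Dn_nbrs_subset[of n i] finite_subset[OF Dn_nbrs_subset[of n i]]
      by (auto simp: prod_zero_iff)
    moreover have "(\<Prod>j\<in>Dn_nbrs n i. c' j) = inverse (\<Prod>j\<in>Dn_nbrs n i. c j)"
      using prod_inversef[of c "Dn_nbrs n i"] by (simp add: c'_def o_def)
    ultimately show "\<alpha> i * (\<Prod>j\<in>Dn_nbrs n i. c' j) = \<beta> i"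
      using eq \<open>i \<in> {1..n}\<close> by (metis mult.assoc mult.right_neutral right_inverse)
  qed
  have inverse_pair: "msubst G (F k) = mVar k" "msubst F (G k) = mVar k" if "k \<in> XD_vars n" for k
    using dual_scale_inverse[OF nz that, folded c'_def]
    unfolding F_def G_def msubst_rescale_rescale by (simp_all add: rescale_def mult.commute)
  show ?thesis
    unfolding XD_iso_def coord_ring_iso_def
  proof (intro exI conjI ballI)
    fix k assume "k \<in> XD_vars n"
    then show "mvars (F k) \<subseteq> XD_vars n" "mvars (G k) \<subseteq> XD_vars n"
      using mvars_mConst_mult_mVar unfolding F_def G_def rescale_def by fast+
    show "msubst G (F k) - mVar k \<in> mideal (XD_vars n) (XD_eqs n \<beta>)"
         "msubst F (G k) - mVar k \<in> mideal (XD_vars n) (XD_eqs n \<alpha>)"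
      using inverse_pair[OF \<open>k \<in> XD_vars n\<close>] by (simp_all add: zero_mem_mideal)
  next
    fix q
    show "q \<in> XD_eqs n \<beta> \<Longrightarrow> msubst F q \<in> mideal (XD_vars n) (XD_eqs n \<alpha>)"
      unfolding F_def by (rule msubst_rescale_XD_eqs[OF nz eq])
    show "q \<in> XD_eqs n \<alpha> \<Longrightarrow> msubst G q \<in> mideal (XD_vars n) (XD_eqs n \<beta>)"
      unfolding G_def by (rule msubst_rescale_XD_eqs[OF nz' eq'])
  qed
qed

text \<open>path_scale \<alpha> n t m is c_{n+1-m} in the solution of c_{k-1} c_{k+1} = \<alpha>_k
  with c_{n+1} = 1 and c_n = t.\<close>

fun path_scale :: "(nat \<Rightarrow> 'a::field) \<Rightarrow> nat \<Rightarrow> 'a \<Rightarrow> nat \<Rightarrow> 'a" where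
  "path_scale \<alpha> n t 0 = 1"
| "path_scale \<alpha> n t (Suc 0) = t"
| "path_scale \<alpha> n t (Suc (Suc m)) = \<alpha> (n - m) / path_scale \<alpha> n t m"

lemma path_scale_nonzero:
  "t \<noteq> 0 \<Longrightarrow> \<forall>i\<in>{1..n}. \<alpha> i \<noteq> 0 \<Longrightarrow> m \<le> n \<Longrightarrow> path_scale \<alpha> n t m \<noteq> 0"
  by (induction \<alpha> n t m rule: path_scale.induct) auto

lemma path_scale_odd_surj:
  assumes nz: "\<forall>i\<in>{1..n}. \<alpha> i \<noteq> 0" and "odd m" "m < n" "y \<noteq> 0"
  shows "\<exists>t. t \<noteq> 0 \<and> path_scale \<alpha> n t m = y"
proof -
  obtain k where "m = 2 * k + 1"
    using \<open>odd m\<close> by (auto elim: oddE)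
  moreover have "2 * k + 1 < n \<Longrightarrow> y \<noteq> 0 \<Longrightarrow> \<exists>t. t \<noteq> 0 \<and> path_scale \<alpha> n t (2 * k + 1) = y"
  proof (induction k arbitrary: y)
    case 0
    then show ?case by auto
  next
    case (Suc k)
    have a: "\<alpha> (n - (2 * k + 1)) \<noteq> 0"
      using nz Suc.prems by auto
    then obtain t where t: "t \<noteq> 0" "path_scale \<alpha> n t (2 * k + 1) = \<alpha> (n - (2 * k + 1)) / y"
      using Suc.IH[of "\<alpha> (n - (2 * k + 1)) / y"] Suc.prems by auto
    have "2 * Suc k + 1 = Suc (Suc (2 * k + 1))"
      by simp
    then have "path_scale \<alpha> n t (2 * Suc k + 1) = \<alpha> (n - (2 * k + 1)) / path_scale \<alpha> n t (2 * k + 1)"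
      by (simp only: path_scale.simps)
    then show ?case
      using t a Suc.prems by auto
  qed
  ultimately show ?thesis
    using assms by blast
qed

lemma Dn_nbrs_leaf: "n \<ge> 3 \<Longrightarrow> i \<in> {1, 2} \<Longrightarrow> Dn_nbrs n i = {3}"
  by (auto simp: Dn_nbrs_def Dn_edge_def doubleton_eq_iff)

lemma Dn_nbrs_3: "n \<ge> 3 \<Longrightarrow> Dn_nbrs n 3 = {1, 2} \<union> (if 4 \<le> n then {4} else {})"
  by (auto simp: Dn_nbrs_def Dn_edge_def doubleton_eq_iff)

lemma Dn_nbrs_path: "4 \<le> i \<Longrightarrow> i \<le> n \<Longrightarrow> Dn_nbrs n i = {i - 1} \<union> (if i + 1 \<le> n then {i + 1} else {})"
  by (auto simp: Dn_nbrs_def Dn_edge_def doubleton_eq_iff)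

lemma path_scale_solution:
  fixes \<alpha> :: "nat \<Rightarrow> 'a::field"
  assumes n: "n \<ge> 3" and nz: "\<forall>i\<in>{1..n}. \<alpha> i \<noteq> 0" and t: "t \<noteq> 0"
  shows "\<exists>c. (\<forall>j\<in>{1..n}. c j \<noteq> 0) \<and> (\<forall>i\<in>{3..n}. (\<Prod>j\<in>Dn_nbrs n i. c j) = \<alpha> i)
           \<and> c 3 = path_scale \<alpha> n t (n - 2)"
proof -
  define c where "c k = (if k = 1 then \<alpha> 3 / path_scale \<alpha> n t (n - 3) else if k = 2 then 1
      else path_scale \<alpha> n t (n + 1 - k))" for k
  have ps_nz: "m \<le> n \<Longrightarrow> path_scale \<alpha> n t m \<noteq> 0" for m
    using path_scale_nonzero[OF t nz] .
  have c_end: "c (n + 1) = 1"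
    using n by (simp add: c_def)
  have c_nz: "\<forall>j\<in>{1..n}. c j \<noteq> 0"
    using ps_nz nz n by (auto simp: c_def)
  have at_3: "(\<Prod>j\<in>Dn_nbrs n 3. c j) = \<alpha> 3"
  proof -
    have "(\<Prod>j\<in>Dn_nbrs n 3. c j) = c 1 * c 2 * c 4"
      using c_end n by (cases "n = 3") (auto simp: Dn_nbrs_3 mult_ac)
    then show ?thesis
      using ps_nz[of "n - 3"] by (simp add: c_def)
  qed
  have on_path: "(\<Prod>j\<in>Dn_nbrs n i. c j) = \<alpha> i" if i: "4 \<le> i" "i \<le> n" for i
  proof -
    have "(\<Prod>j\<in>Dn_nbrs n i. c j) = c (i - 1) * c (i + 1)"
      using c_end i by (cases "i = n") (auto simp: Dn_nbrs_path mult_ac)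
    moreover have "c (i - 1) = \<alpha> i / path_scale \<alpha> n t (n - i)"
    proof -
      have "i - 1 \<noteq> 1" "i - 1 \<noteq> 2" "n + 1 - (i - 1) = Suc (Suc (n - i))" "n - (n - i) = i"
        using i by auto
      then show ?thesis
        unfolding c_def by (simp only: if_False path_scale.simps)
    qed
    moreover have "c (i + 1) = path_scale \<alpha> n t (n - i)"
      using i by (simp add: c_def)
    ultimately show ?thesis
      using ps_nz[of "n - i"] by simp
  qed
  have "\<forall>i\<in>{3..n}. (\<Prod>j\<in>Dn_nbrs n i. c j) = \<alpha> i"
  proof
    fix i assume "i \<in> {3..n}"
    then show "(\<Prod>j\<in>Dn_nbrs n i. c j) = \<alpha> i"
      using at_3 on_path by (cases "i = 3") auto
  qed
  moreover have "c 3 = path_scale \<alpha> n t (n - 2)"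
    by (simp add: c_def numeral_eq_Suc)
  ultimately show ?thesis
    using c_nz by blast
qed

lemma XD_iso_leaf_weights:
  fixes \<alpha> c :: "nat \<Rightarrow> 'a::field"
  assumes n: "n \<ge> 3" and nz: "\<forall>j\<in>{1..n}. c j \<noteq> 0"
    and path: "\<forall>i\<in>{3..n}. (\<Prod>j\<in>Dn_nbrs n i. c j) = \<alpha> i"
  shows "XD_iso n \<alpha> (\<lambda>i. if i = 1 then \<alpha> 1 / c 3 else if i = 2 then \<alpha> 2 / c 3 else 1)"
proof (rule XD_iso_rescale[OF nz], intro ballI)
  fix i assume "i \<in> {1..n}"
  moreover have "c 3 \<noteq> 0"
    using nz n by auto
  ultimately show "(if i = 1 then \<alpha> 1 / c 3 else if i = 2 then \<alpha> 2 / c 3 else 1)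
      * (\<Prod>j\<in>Dn_nbrs n i. c j) = \<alpha> i"
    using path Dn_nbrs_leaf[OF n] by auto
qed

theorem mainTheorem15:
  fixes \<alpha> :: "nat \<Rightarrow> 'a::field" and n :: nat
  assumes "n \<ge> 3"
    and "\<forall>i\<in>{1..n}. \<alpha> i \<noteq> 0"
  shows "(even n \<longrightarrow> (\<exists>a b. a \<noteq> 0 \<and> b \<noteq> 0 \<and>
            XD_iso n \<alpha> (\<lambda>i. if i = 1 then a else if i = 2 then b else 1)))
       \<and> (odd n \<longrightarrow> (\<exists>a. a \<noteq> 0 \<and>
            XD_iso n \<alpha> (\<lambda>i. if i = 1 then a else 1)))"
proof -
  have \<alpha>_12: "\<alpha> 1 \<noteq> 0" "\<alpha> 2 \<noteq> 0"
    using assms by auto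
  obtain c where c_nz: "\<forall>j\<in>{1..n}. c j \<noteq> 0"
    and c_path: "\<forall>i\<in>{3..n}. (\<Prod>j\<in>Dn_nbrs n i. c j) = \<alpha> i"
    using path_scale_solution[OF assms one_neq_zero] by blast
  have "c 3 \<noteq> 0"
    using c_nz assms(1) by auto
  then have two_weights: "\<exists>a b. a \<noteq> 0 \<and> b \<noteq> 0 \<and>
      XD_iso n \<alpha> (\<lambda>i. if i = 1 then a else if i = 2 then b else 1)"
    using XD_iso_leaf_weights[OF assms(1) c_nz c_path] \<alpha>_12
    by (intro exI[of _ "\<alpha> 1 / c 3"] exI[of _ "\<alpha> 2 / c 3"]) auto
  have "\<exists>a. a \<noteq> 0 \<and> XD_iso n \<alpha> (\<lambda>i. if i = 1 then a else 1)" if "odd n"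
  proof -
    have "odd (n - 2)" "n - 2 < n"
      using that assms(1) by auto
    then obtain t where "t \<noteq> 0" "path_scale \<alpha> n t (n - 2) = \<alpha> 2"
      using path_scale_odd_surj[OF assms(2) _ _ \<alpha>_12(2)] by blast
    then obtain c where c_nz: "\<forall>j\<in>{1..n}. c j \<noteq> 0"
      and c_path: "\<forall>i\<in>{3..n}. (\<Prod>j\<in>Dn_nbrs n i. c j) = \<alpha> i" and "c 3 = \<alpha> 2"
      using path_scale_solution[OF assms] by metis
    have "(\<lambda>i::nat. if i = 1 then \<alpha> 1 / c 3 else if i = 2 then \<alpha> 2 / c 3 else 1)
        = (\<lambda>i. if i = 1 then \<alpha> 1 / \<alpha> 2 else 1)"
      using \<open>c 3 = \<alpha> 2\<close> \<alpha>_12 by auto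
    then have "XD_iso n \<alpha> (\<lambda>i. if i = 1 then \<alpha> 1 / \<alpha> 2 else 1)"
      using XD_iso_leaf_weights[OF assms(1) c_nz c_path] by (simp only:)
    then show ?thesis
      using \<alpha>_12 by (intro exI[of _ "\<alpha> 1 / \<alpha> 2"]) simp
  qed
  with two_weights show ?thesis
    by blast
qed

end
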